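(* Let $p_1,\ldots,p_m\in\mathbb Z_{>0}$ and $p=\operatorname{lcm}(p_1,\ldots,p_m)$. Let $\Gamma_1,\ldots,\Gamma_m$ be words in affine letters, $e_1,\ldots,e_m\in\mathbb Z_{\ge0}$, $z\in\mathbb C$, $t\in\mathbb Z_{\ge0}$, and $a_\nu,b_\nu,q_\nu\in\mathbb C$ for $1\le\nu\le t$ ($t=0$ allowed). Assume that all affine factors appearing are nonzero at the positive integers at which they are evaluated, after all scale changes (that is, each affine factor $(a,b)$ occurring in a letter of $\Gamma_j$ remains nonzero when its slope is replaced by $a/(p/p_j)$ and it is evaluated at positive integers up to $pk$, and $a_\nu m/p+b_\nu\ne0$ for positive integers $m\le pk$), and fix compatible branches of the powers. Then for every positive integer $k$, \[ S(k)=\sum_{n=1}^{k}z^n\prod_{\nu=1}^{t}(a_\nu n+b_\nu)^{q_\nu}\prod_{j=1}^{m}\mathcal G_{\Gamma_j}(p_jn)^{e_j}\in\operatorname{span}_{\mathbb C}\{\mathcal G_\Delta(pk)\}_\Delta, \] where $\Delta$ ranges over words in affine letters.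
   Context: An affine letter is a triple $L=(\boldsymbol\rho,\sigma,\mathbf A)$ with $\boldsymbol\rho=(\rho_1,\ldots,\rho_t)\in\mathbb C^t$, $\sigma\in\mathbb C$, $\mathbf A=((a_1,b_1),\ldots,(a_t,b_t))$, $a_\nu,b_\nu\in\mathbb C$; its value at a positive integer $n$ is $L(n)=\sigma^n\prod_{\nu=1}^t(a_\nu n+b_\nu)^{-\rho_\nu}$ (branches fixed). For a word $\Gamma=(L_1,\ldots,L_d)$ of affine letters, $\mathcal G_\Gamma(N)=\sum_{N\ge n_1>\cdots>n_d\ge1}\prod_{j=1}^dL_j(n_j)$ and $\mathcal G_\emptyset(N)=1$. *)

theory Defs
  imports "HOL-Analysis.Complex_Transcendental"
begin

text \<open>An affine letter L = (sigma, [(rho_1,a_1,b_1),...,(rho_t,a_t,b_t)]).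
  Its value at n is sigma^n * prod_nu (a_nu n + b_nu) powr (-rho_nu),
  using the principal branch of complex powr.\<close>
type_synonym aletter = "complex \<times> (complex \<times> complex \<times> complex) list"
type_synonym aword = "aletter list"

definition letter_val :: "aletter \<Rightarrow> nat \<Rightarrow> complex" where
  "letter_val L n = fst L ^ n *
     (\<Prod>(\<rho>, a, b) \<leftarrow> snd L. ((a::complex) * of_nat n + b) powr (- (\<rho>::complex)))"

text \<open>G_Gamma(N) = sum over N >= n_1 > ... > n_d >= 1 of prod_j L_j(n_j),
  written recursively on the word; G_[] = 1.\<close>
fun Gw :: "aword \<Rightarrow> nat \<Rightarrow> complex" where
  "Gw [] N = 1"
| "Gw (L # \<Gamma>) N = (\<Sum>n\<in>{1..N}. letter_val L n * Gw \<Gamma> (n - 1))"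

end

theory Submission
  imports Defs "HOL-Computational_Algebra.Fundamental_Theorem_Algebra"
begin

text \<open>
  Consider the complex span of the functions \<open>N \<mapsto> G\<^sub>\<Delta>(N)\<close>. It contains 1 and is closed
  under partial summation against a letter, both in the shifted form \<open>\<Sum>n\<le>N. L(n) F(n-1)\<close>
  (which prepends \<open>L\<close> to a word) and in the diagonal form \<open>\<Sum>n\<le>N. L(n) F(n)\<close>. It is closed
  under products by the quasi-shuffle identity, obtained by splitting a product of two nested
  sums according to which outer index is larger. It is closed under dilation
  \<open>F(N) \<mapsto> F(N div r)\<close>: restricting a sum to the multiples of \<open>r\<close> amounts to averaging over
  the \<open>r\<close>-th roots of unity \<open>\<omega>\<^sup>j\<close>, and if \<open>s\<^sup>r = \<sigma>\<close>, the filtered letter \<open>[r | M] L(M/r)\<close>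
  is the average of the letters with base \<open>\<omega>\<^sup>j s\<close> and all slopes divided by \<open>r\<close>. Finally,
  \<open>S(k)\<close> is the filtered diagonal partial sum up to \<open>Pk\<close> of one letter against a product of
  dilated \<open>G\<close>-functions.
\<close>

definition G_comb :: "(complex \<times> aword) list \<Rightarrow> nat \<Rightarrow> complex" where
  "G_comb cs N = (\<Sum>(c, \<Delta>) \<leftarrow> cs. c * Gw \<Delta> N)"

definition G_span :: "(nat \<Rightarrow> complex) set" where
  "G_span = range G_comb"

lemma G_comb_Nil [simp]: "G_comb [] = (\<lambda>N. 0)"
  by (simp add: G_comb_def fun_eq_iff)

lemma G_comb_Cons [simp]: "G_comb ((c, \<Delta>) # cs) = (\<lambda>N. c * Gw \<Delta> N + G_comb cs N)"
  by (simp add: G_comb_def fun_eq_iff)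

lemma G_comb_append: "G_comb (cs @ ds) N = G_comb cs N + G_comb ds N"
  by (simp add: G_comb_def)

lemma G_comb_scale: "G_comb (map (\<lambda>(c, \<Delta>). (a * c, \<Delta>)) cs) N = a * G_comb cs N"
  by (induction cs) (auto simp: algebra_simps)

lemma G_span_eqI: "F \<in> G_span \<Longrightarrow> (\<And>N. F N = G N) \<Longrightarrow> G \<in> G_span"
  by (metis ext)

lemma Gw_in_G_span: "Gw \<Delta> \<in> G_span"
  unfolding G_span_def by (rule range_eqI[of _ _ "[(1, \<Delta>)]"]) (simp add: fun_eq_iff)

lemma one_in_G_span: "(\<lambda>N. 1) \<in> G_span"
  by (rule G_span_eqI[OF Gw_in_G_span[of "[]"]]) simp

lemma zero_in_G_span: "(\<lambda>N. 0) \<in> G_span"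
  unfolding G_span_def by (rule range_eqI[of _ _ "[]"]) simp

lemma G_span_add: "F \<in> G_span \<Longrightarrow> G \<in> G_span \<Longrightarrow> (\<lambda>N. F N + G N) \<in> G_span"
  unfolding G_span_def by (metis (no_types, lifting) G_comb_append ext rangeE rangeI)

lemma G_span_scale: "F \<in> G_span \<Longrightarrow> (\<lambda>N. c * F N) \<in> G_span"
  unfolding G_span_def by (metis (no_types, lifting) G_comb_scale ext rangeE rangeI)

lemma G_span_sum:
  "finite I \<Longrightarrow> (\<And>i. i \<in> I \<Longrightarrow> f i \<in> G_span) \<Longrightarrow> (\<lambda>N. \<Sum>i\<in>I. f i N) \<in> G_span"
  by (induction I rule: finite_induct) (auto intro: G_span_add zero_in_G_span)

lemma G_span_linear_image:
  assumes "F \<in> G_span"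
    and basis: "\<And>\<Delta>. T (Gw \<Delta>) \<in> G_span"
    and zero: "T (\<lambda>N. 0) = (\<lambda>N. 0)"
    and linear: "\<And>c f g. T (\<lambda>N. c * f N + g N) = (\<lambda>N. c * T f N + T g N)"
  shows "T F \<in> G_span"
proof -
  have "T (G_comb cs) \<in> G_span" for cs
  proof (induction cs)
    case Nil
    show ?case by (simp add: zero zero_in_G_span)
  next
    case (Cons x cs)
    then show ?case
      by (cases x) (simp add: linear G_span_add G_span_scale basis)
  qed
  then show ?thesis
    using assms(1) unfolding G_span_def by blast
qed

definition letter_mult :: "aletter \<Rightarrow> aletter \<Rightarrow> aletter" where
  "letter_mult A B = (fst A * fst B, snd A @ snd B)"

lemma letter_val_letter_mult: "letter_val (letter_mult A B) n = letter_val A n * letter_val B n"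
  by (simp add: letter_mult_def letter_val_def power_mult_distrib algebra_simps)

lemma Gw_Cons_Suc: "Gw (L # \<Delta>) (Suc n) = Gw (L # \<Delta>) n + letter_val L (Suc n) * Gw \<Delta> n"
  by simp

lemma G_span_partial_sum:
  assumes "F \<in> G_span"
  shows "(\<lambda>N. \<Sum>n=1..N. letter_val L n * F (n - 1)) \<in> G_span"
  using assms
proof (rule G_span_linear_image[where T = "\<lambda>F N. \<Sum>n=1..N. letter_val L n * F (n - 1)"])
  show "(\<lambda>N. \<Sum>n=1..N. letter_val L n * Gw \<Delta> (n - 1)) \<in> G_span" for \<Delta>
    by (rule G_span_eqI[OF Gw_in_G_span[of "L # \<Delta>"]]) simp
qed (auto simp: sum.distrib sum_distrib_left algebra_simps fun_eq_iff)

lemma G_span_partial_sum_diagonal: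
  assumes "F \<in> G_span"
  shows "(\<lambda>N. \<Sum>n=1..N. letter_val L n * F n) \<in> G_span"
  using assms
proof (rule G_span_linear_image[where T = "\<lambda>F N. \<Sum>n=1..N. letter_val L n * F n"])
  fix \<Delta>
  show "(\<lambda>N. \<Sum>n=1..N. letter_val L n * Gw \<Delta> n) \<in> G_span"
  proof (cases \<Delta>)
    case Nil
    then show ?thesis
      by (intro G_span_eqI[OF Gw_in_G_span[of "[L]"]]) simp
  next
    case (Cons L' \<Delta>')
    \<comment> \<open>Expanding the top letter of \<open>\<Delta>\<close> once turns the diagonal sum into two shifted ones.\<close>
    have "letter_val L n * Gw \<Delta> n = letter_val L n * Gw \<Delta> (n - 1)
            + letter_val (letter_mult L L') n * Gw \<Delta>' (n - 1)" if "n \<ge> 1" for n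
      using that Gw_Cons_Suc[of L' \<Delta>' "n - 1"]
      by (simp add: Cons letter_val_letter_mult algebra_simps del: Gw.simps)
    then have split: "Gw (L # \<Delta>) N + Gw (letter_mult L L' # \<Delta>') N
               = (\<Sum>n=1..N. letter_val L n * Gw \<Delta> n)" for N
      by (simp add: sum.distrib)
    show ?thesis
      by (rule G_span_eqI[OF G_span_add[OF Gw_in_G_span Gw_in_G_span] split])
  qed
qed (auto simp: sum.distrib sum_distrib_left algebra_simps fun_eq_iff)

lemma Gw_Cons_mult:
  "Gw (A # X) N * Gw (B # Y) N =
     (\<Sum>n=1..N. letter_val A n * (Gw X (n - 1) * Gw (B # Y) (n - 1))
              + letter_val B n * (Gw (A # X) (n - 1) * Gw Y (n - 1))
              + letter_val (letter_mult A B) n * (Gw X (n - 1) * Gw Y (n - 1)))"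
proof (induction N)
  case 0
  show ?case by simp
next
  case (Suc N)
  have "Gw (A # X) (Suc N) * Gw (B # Y) (Suc N) = Gw (A # X) N * Gw (B # Y) N
          + letter_val A (Suc N) * (Gw X N * Gw (B # Y) N)
          + letter_val B (Suc N) * (Gw (A # X) N * Gw Y N)
          + letter_val (letter_mult A B) (Suc N) * (Gw X N * Gw Y N)"
    by (simp only: Gw_Cons_Suc letter_val_letter_mult) (simp add: algebra_simps del: Gw.simps)
  then show ?case
    using Suc.IH by (simp del: Gw.simps)
qed

lemma Gw_mult_in_G_span: "(\<lambda>N. Gw \<Delta>\<^sub>1 N * Gw \<Delta>\<^sub>2 N) \<in> G_span"
proof (induction \<Delta>\<^sub>1 arbitrary: \<Delta>\<^sub>2)
  case Nil
  show ?case by (simp add: Gw_in_G_span)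
next
  case (Cons A X)
  note IH_tail = Cons.IH
  show ?case
  proof (induction \<Delta>\<^sub>2)
    case Nil
    show ?case by (rule G_span_eqI[OF Gw_in_G_span[of "A # X"]]) simp
  next
    case (Cons B Y)
    show ?case
      unfolding Gw_Cons_mult sum.distrib
      by (intro G_span_add G_span_partial_sum Cons.IH IH_tail)
  qed
qed

lemma G_span_mult:
  assumes "F \<in> G_span" "G \<in> G_span"
  shows "(\<lambda>N. F N * G N) \<in> G_span"
proof -
  have "(\<lambda>N. Gw \<Delta> N * G N) \<in> G_span" for \<Delta>
    using assms(2)
    by (rule G_span_linear_image[where T = "\<lambda>G N. Gw \<Delta> N * G N"])
       (auto simp: Gw_mult_in_G_span algebra_simps fun_eq_iff)
  with assms(1) show ?thesis
    by (rule_tac G_span_linear_image[where T = "\<lambda>F N. F N * G N"])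
       (auto simp: algebra_simps fun_eq_iff)
qed

lemma G_span_power: "F \<in> G_span \<Longrightarrow> (\<lambda>N. F N ^ k) \<in> G_span"
  by (induction k) (auto intro: G_span_mult one_in_G_span)

lemma G_span_prod:
  "finite I \<Longrightarrow> (\<And>i. i \<in> I \<Longrightarrow> f i \<in> G_span) \<Longrightarrow> (\<lambda>N. \<Prod>i\<in>I. f i N) \<in> G_span"
  by (induction I rule: finite_induct) (auto intro: G_span_mult one_in_G_span)

lemma sum_multiples:
  assumes "(r::nat) > 0"
  shows "(\<Sum>M=1..N. if r dvd M then f (M div r) else 0) = (\<Sum>n=1..N div r. f n)"
proof (induction N)
  case 0
  show ?case by simp
next
  case (Suc N)
  show ?case
  proof (cases "r dvd Suc N")
    case True
    then have "Suc N div r = Suc (N div r)"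
      using assms by (simp add: div_Suc dvd_eq_mod_eq_0)
    then show ?thesis using Suc True by simp
  next
    case False
    then have "Suc N div r = N div r"
      by (simp add: div_Suc dvd_eq_mod_eq_0)
    then show ?thesis using Suc False by simp
  qed
qed

lemma sum_roots_unity_power:
  assumes r: "r > 0"
  defines "\<omega> \<equiv> exp (2 * of_real pi * \<i> / of_nat r)"
  shows "(\<Sum>j<r. (\<omega> ^ j) ^ M) = (if r dvd M then of_nat r else 0)"
proof -
  have \<omega>_power: "\<omega> ^ M = exp (2 * of_real pi * \<i> * of_nat M / of_nat r)"
    unfolding \<omega>_def exp_of_nat_mult[symmetric] by (simp add: algebra_simps)
  have "(\<Sum>j<r. (\<omega> ^ j) ^ M) = (\<Sum>j<r. (\<omega> ^ M) ^ j)"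
    by (simp add: power_mult[symmetric] mult.commute)
  also have "\<dots> = (if r dvd M then of_nat r else 0)"
    using complex_root_unity_eq_1[of r M] complex_root_unity[of r M] r
    by (auto simp: sum_gp_strict \<omega>_power)
  finally show ?thesis .
qed

definition rescale_letter :: "nat \<Rightarrow> complex \<Rightarrow> aletter \<Rightarrow> aletter" where
  "rescale_letter r \<sigma> L = (\<sigma>, map (\<lambda>(\<rho>, a, b). (\<rho>, a / of_nat r, b)) (snd L))"

lemma filtered_letter_eq_average:
  assumes r: "r > 0" and s: "s ^ r = fst L"
  defines "\<omega> \<equiv> exp (2 * of_real pi * \<i> / of_nat r)"
  shows "(if r dvd M then letter_val L (M div r) else 0)
           = (\<Sum>j<r. letter_val (rescale_letter r (\<omega> ^ j * s) L) M) / of_nat r"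
proof -
  define Y where "Y = (\<Prod>(\<rho>, a, b) \<leftarrow> snd L. (a / of_nat r * of_nat M + b) powr (- \<rho>))"
  have "(\<Sum>j<r. letter_val (rescale_letter r (\<omega> ^ j * s) L) M) = (\<Sum>j<r. (\<omega> ^ j) ^ M) * s ^ M * Y"
    by (simp add: rescale_letter_def letter_val_def Y_def o_def split_def
        power_mult_distrib sum_distrib_right)
  also have "\<dots> = (if r dvd M then of_nat r * (s ^ M * Y) else 0)"
    unfolding \<omega>_def sum_roots_unity_power[OF r] by simp
  also have "\<dots> = of_nat r * (if r dvd M then letter_val L (M div r) else 0)"
  proof (cases "r dvd M")
    case True
    then obtain c where M: "M = r * c" ..
    have "s ^ M = fst L ^ c"
      unfolding M s[symmetric] by (simp add: power_mult)
    moreover have "Y = (\<Prod>(\<rho>, a, b) \<leftarrow> snd L. (a * of_nat c + b) powr (- \<rho>))"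
      unfolding Y_def M using r by (simp add: field_simps)
    ultimately show ?thesis
      using r M by (simp add: letter_val_def)
  qed simp
  finally show ?thesis
    using r by simp
qed

lemma G_span_filtered_partial_sum:
  assumes r: "r > 0"
    and closed: "\<And>L'. (\<lambda>N. \<Sum>M=1..N. letter_val L' M * F M) \<in> G_span"
  shows "(\<lambda>N. \<Sum>M=1..N. (if r dvd M then letter_val L (M div r) else 0) * F M) \<in> G_span"
proof -
  obtain s where s: "s ^ r = fst L"
    using nth_root_exists[OF r] by blast
  define \<omega> where "\<omega> = exp (2 * of_real pi * \<i> / of_nat r)"
  define A where "A j = letter_val (rescale_letter r (\<omega> ^ j * s) L)" for j
  have filter: "(\<Sum>j<r. A j M) / of_nat r = (if r dvd M then letter_val L (M div r) else 0)" for M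
    unfolding A_def \<omega>_def by (rule filtered_letter_eq_average[OF r s, symmetric])
  have average: "(\<Sum>j<r. 1 / of_nat r * (\<Sum>M=1..N. A j M * F M))
     = (\<Sum>M=1..N. (if r dvd M then letter_val L (M div r) else 0) * F M)" for N
    unfolding filter[symmetric]
    by (simp add: sum_distrib_left sum_divide_distrib sum_distrib_right sum.swap[of _ "{..<r}"]
        algebra_simps)
  have "(\<lambda>N. 1 / of_nat r * (\<Sum>M=1..N. A j M * F M)) \<in> G_span" for j
    unfolding A_def by (rule G_span_scale[OF closed])
  then show ?thesis
    by (rule G_span_eqI[OF G_span_sum[OF finite_lessThan] average])
qed

lemma Gw_div_in_G_span:
  assumes r: "r > 0"
  shows "(\<lambda>N. Gw \<Gamma> (N div r)) \<in> G_span"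
proof (induction \<Gamma>)
  case Nil
  show ?case by (simp add: one_in_G_span)
next
  case (Cons L \<Gamma>)
  have shift: "(M - 1) div r = M div r - 1" if "r dvd M" for M
    using that r by (cases M) (auto simp: div_Suc dvd_eq_mod_eq_0)
  have expand: "(\<Sum>M=1..N. (if r dvd M then letter_val L (M div r) else 0) * Gw \<Gamma> ((M - 1) div r))
                = Gw (L # \<Gamma>) (N div r)" for N
  proof -
    have "Gw (L # \<Gamma>) (N div r) = (\<Sum>n=1..N div r. letter_val L n * Gw \<Gamma> (n - 1))"
      by simp
    also have "\<dots> = (\<Sum>M=1..N. if r dvd M then letter_val L (M div r) * Gw \<Gamma> (M div r - 1) else 0)"
      by (rule sum_multiples[OF r, symmetric])
    also have "\<dots> = (\<Sum>M=1..N. (if r dvd M then letter_val L (M div r) else 0) * Gw \<Gamma> ((M - 1) div r))"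
      by (rule sum.cong[OF refl]) (use shift in simp)
    finally show ?thesis ..
  qed
  show ?case
    by (rule G_span_eqI[OF G_span_filtered_partial_sum[OF r G_span_partial_sum[OF Cons.IH]] expand])
qed

lemma sum_multiples_mult:
  fixes f g :: "nat \<Rightarrow> 'a::semiring_0"
  assumes "r > 0"
  shows "(\<Sum>M=1..r * k. (if r dvd M then f (M div r) else 0) * g M) = (\<Sum>n=1..k. f n * g (r * n))"
proof -
  have "(\<Sum>M=1..r * k. (if r dvd M then f (M div r) else 0) * g M)
        = (\<Sum>M=1..r * k. if r dvd M then f (M div r) * g (r * (M div r)) else 0)"
    by (rule sum.cong) auto
  also have "\<dots> = (\<Sum>n=1..k. f n * g (r * n))"
    using sum_multiples[OF assms, where N = "r * k" and f = "\<lambda>n. f n * g (r * n)"] assms by simp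
  finally show ?thesis .
qed

lemma sum_letter_at_multiples_in_G_span:
  assumes r: "r > 0" and H: "H \<in> G_span"
  shows "\<exists>cs. \<forall>k. (\<Sum>n=1..k. letter_val L n * H (r * n)) = G_comb cs (r * k)"
proof -
  obtain cs where cs: "(\<lambda>N. \<Sum>M=1..N. (if r dvd M then letter_val L (M div r) else 0) * H M) = G_comb cs"
    using G_span_filtered_partial_sum[OF r G_span_partial_sum_diagonal[OF H]]
    unfolding G_span_def by blast
  have "(\<Sum>n=1..k. letter_val L n * H (r * n)) = G_comb cs (r * k)" for k
    unfolding cs[symmetric] by (rule sum_multiples_mult[OF r, symmetric])
  then show ?thesis by blast
qed

lemma letter_val_factors:
  "letter_val (z, map (\<lambda>\<nu>. (- q \<nu>, a \<nu>, b \<nu>)) [0..<t]) n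
     = z ^ n * (\<Prod>\<nu><t. (a \<nu> * of_nat n + b \<nu>) powr q \<nu>)"
  unfolding letter_val_def
  by (simp add: o_def prod.distinct_set_conv_list[symmetric] atLeast0LessThan)

theorem theorem6p2:
  fixes m t :: nat
    and p :: "nat \<Rightarrow> nat"
    and \<Gamma> :: "nat \<Rightarrow> aword"
    and e :: "nat \<Rightarrow> nat"
    and z :: complex
    and a b q :: "nat \<Rightarrow> complex"
    and P :: nat
  assumes p_pos: "\<forall>j<m. p j > 0"
    and P_def: "P = Lcm (p ` {..<m})"
    and nz_words: "\<forall>j<m. \<forall>L\<in>set (\<Gamma> j). \<forall>(\<rho>, a', b')\<in>set (snd L).
                     \<forall>n::nat. n \<ge> 1 \<longrightarrow> a' / of_nat (P div p j) * of_nat n + b' \<noteq> 0"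
    and nz_outer: "\<forall>\<nu><t. \<forall>n::nat. n \<ge> 1 \<longrightarrow> a \<nu> * of_nat n / of_nat P + b \<nu> \<noteq> 0"
  shows "\<exists>cs :: (complex \<times> aword) list. \<forall>k::nat. k \<ge> 1 \<longrightarrow>
           (\<Sum>n=1..k. z ^ n * (\<Prod>\<nu><t. (a \<nu> * of_nat n + b \<nu>) powr (q \<nu>))
                       * (\<Prod>j<m. (Gw (\<Gamma> j) (p j * n)) ^ (e j)))
           = (\<Sum>(c, \<Delta>) \<leftarrow> cs. c * Gw \<Delta> (P * k))"
proof -
  have P_pos: "P > 0"
    using p_pos unfolding P_def neq0_conv[symmetric] by (subst Lcm_0_iff) auto
  have p_dvd_P: "p j dvd P" if "j < m" for j
    using that unfolding P_def by (simp add: dvd_Lcm)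
  define L\<^sub>0 :: aletter where "L\<^sub>0 = (z, map (\<lambda>\<nu>. (- q \<nu>, a \<nu>, b \<nu>)) [0..<t])"
  define H where "H M = (\<Prod>j<m. Gw (\<Gamma> j) (M div (P div p j)) ^ e j)" for M
  have quotient_pos: "P div p j > 0" if "j < m" for j
    using p_dvd_P[OF that] P_pos by (metis dvd_div_eq_0_iff neq0_conv)
  have H_span: "H \<in> G_span"
    unfolding H_def[abs_def]
    by (intro G_span_prod G_span_power[OF Gw_div_in_G_span] quotient_pos) simp_all
  have "(P * n) div (P div p j) = p j * n" if "j < m" for j n
    using p_dvd_P[OF that] P_pos by (simp add: div_div_eq_right)
  then have H_multiple: "H (P * n) = (\<Prod>j<m. Gw (\<Gamma> j) (p j * n) ^ e j)" for n
    unfolding H_def by simp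
  obtain cs where cs: "\<And>k. (\<Sum>n=1..k. letter_val L\<^sub>0 n * H (P * n)) = G_comb cs (P * k)"
    using sum_letter_at_multiples_in_G_span[OF P_pos H_span] by blast
  show ?thesis
    using cs by (intro exI[of _ cs] allI impI)
      (simp add: G_comb_def L\<^sub>0_def letter_val_factors H_multiple)
qed

end
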